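(* Let $A$ be a real $N\times N$ matrix with $\rho(|A|)<1$, let $L\ge1$, and let $\mathcal{B}$ be a finite family of subsets of $\{1,\dots,N\}$ such that (1) every orbit $\ell$ of $A$ with $|\ell|<L$ is covered by some $B\in\mathcal{B}$, and (2) $B,B'\in\mathcal{B}$ implies $B\cap B'\in\mathcal{B}$. With $Z(A)=\det(I-A)^{-1}$ and $Z_{\mathcal{B}}=\prod_{B\in\mathcal{B}}\big(\det(I-A_B)^{-1}\big)^{w_B}$ as in the context, $$\frac1N\left|\log\frac{Z_{\mathcal{B}}}{Z(A)}\right|\le\frac{\rho(|A|)^L}{L\,(1-\rho(|A|))}.$$
   Context: $|A|$ is the entrywise absolute value and $\rho$ the spectral radius. Walks of $A$: sequences $(w_0,\dots,w_m)$ of indices with $A_{w_tw_{t+1}}\neq0$; closed if $m\ge1$ and $w_0=w_m$; primitive if not a $k$-fold concatenation ($k\ge2$) of a shorter closed walk. An orbit is an equivalence class of closed primitive walks under cyclic shifts, of length $|\ell|$ equal to that of a representative. An orbit is covered by $B$ if all its vertices lie in $B$. $A_B$ is the principal submatrix of $A$ on $B$ (with $\det(I-A_\emptyset)=1$). Block weights: $w_B=1$ if $B$ is maximal in $\mathcal{B}$, and otherwise $w_B=1-\sum_{B'\in\mathcal{B},\,B'\supsetneq B}w_{B'}$. *)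

theory Defs
  imports "Jordan_Normal_Form.Spectral_Radius" "Jordan_Normal_Form.DL_Submatrix"
begin

text \<open>Indices are 0,...,N-1 (instead of 1,...,N). A walk (w_0,...,w_m) is a list.\<close>

definition walk :: "real mat \<Rightarrow> nat list \<Rightarrow> bool" where
  "walk A w \<longleftrightarrow> w \<noteq> [] \<and> (\<forall>x\<in>set w. x < dim_row A) \<and>
     (\<forall>t. Suc t < length w \<longrightarrow> A $$ (w ! t, w ! Suc t) \<noteq> 0)"

definition closed_walk :: "real mat \<Rightarrow> nat list \<Rightarrow> bool" where
  "closed_walk A w \<longleftrightarrow> walk A w \<and> length w \<ge> 2 \<and> hd w = last w"

definition walk_length :: "nat list \<Rightarrow> nat" where
  "walk_length w = length w - 1"

text \<open>k-fold concatenation of a closed walk c (consecutive copies share the endpoint)\<close>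
definition walk_power :: "nat list \<Rightarrow> nat \<Rightarrow> nat list" where
  "walk_power c k = c @ concat (replicate (k - 1) (tl c))"

definition primitive_closed_walk :: "real mat \<Rightarrow> nat list \<Rightarrow> bool" where
  "primitive_closed_walk A w \<longleftrightarrow> closed_walk A w \<and>
     \<not> (\<exists>c k. k \<ge> 2 \<and> closed_walk A c \<and> walk_length c < walk_length w \<and> w = walk_power c k)"

definition cyclic_shift :: "nat list \<Rightarrow> nat list" where
  "cyclic_shift w = tl w @ [hd (tl w)]"

definition orbit_of :: "nat list \<Rightarrow> nat list set" where
  "orbit_of w = {(cyclic_shift ^^ k) w | k. True}"

definition orbits :: "real mat \<Rightarrow> nat list set set" where
  "orbits A = {orbit_of w | w. primitive_closed_walk A w}"

definition orbit_length :: "nat list set \<Rightarrow> nat" where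
  "orbit_length l = walk_length (SOME w. w \<in> l)"

definition covered_by :: "nat list set \<Rightarrow> nat set \<Rightarrow> bool" where
  "covered_by l B \<longleftrightarrow> (\<forall>w\<in>l. set w \<subseteq> B)"

definition abs_mat :: "real mat \<Rightarrow> real mat" where
  "abs_mat A = map_mat abs A"

definition rho :: "real mat \<Rightarrow> real" where
  "rho A = spectral_radius (map_mat complex_of_real A)"

definition principal_submatrix :: "real mat \<Rightarrow> nat set \<Rightarrow> real mat" where
  "principal_submatrix A B = submatrix A B B"

definition det_I_minus :: "real mat \<Rightarrow> real" where
  "det_I_minus M = det (1\<^sub>m (dim_row M) - M)"

function block_weight :: "nat set set \<Rightarrow> nat set \<Rightarrow> real" where
  "block_weight \<B> B =
     (if finite \<B> \<and> (\<forall>B'\<in>\<B>. finite B')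
      then 1 - (\<Sum>B'\<in>{B'\<in>\<B>. B \<subset> B'}. block_weight \<B> B')
      else 0)"
  by auto
termination
proof (relation "measure (\<lambda>(\<B>, B). card (\<Union>\<B> - B))")
  show "wf (measure (\<lambda>(\<B>, B). card (\<Union>\<B> - B)))" by simp
next
  fix \<B> :: "nat set set" and B B' :: "nat set"
  assume h: "finite \<B> \<and> (\<forall>B'\<in>\<B>. finite B')" and b: "B' \<in> {B' \<in> \<B>. B \<subset> B'}"
  then have fin: "finite (\<Union>\<B>)" by auto
  from b have "B' \<in> \<B>" "B \<subset> B'" by auto
  then have "\<Union>\<B> - B' \<subset> \<Union>\<B> - B" by blast
  then have "card (\<Union>\<B> - B') < card (\<Union>\<B> - B)"
    using fin by (meson finite_Diff psubset_card_mono)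
  then show "((\<B>, B'), \<B>, B) \<in> measure (\<lambda>(\<B>, B). card (\<Union>\<B> - B))" by simp
qed

definition Z_full :: "real mat \<Rightarrow> real" where
  "Z_full A = inverse (det_I_minus A)"

definition Z_blocks :: "real mat \<Rightarrow> nat set set \<Rightarrow> real" where
  "Z_blocks A \<B> = (\<Prod>B\<in>\<B>. inverse (det_I_minus (principal_submatrix A B)) powr block_weight \<B> B)"

end

theory Submission
  imports Defs "HOL-Analysis.Complex_Transcendental"
begin

text \<open>If the eigenvalues of a real square matrix \<open>M\<close> lie in the open unit disc, then
  \<open>- ln det (I - M) = \<Sum>\<^sub>m tr (M\<^sup>m) / m\<close>, and \<open>tr (M\<^sup>m)\<close> is the total weight of the closed
  index sequences of length \<open>m\<close> in the index set of \<open>M\<close>. Every eigenvalue of a principal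
  submatrix \<open>A\<^sub>B\<close> has modulus at most \<open>\<rho>(|A|) < 1\<close>, so
  \<open>ln (Z\<^sub>\<B> / Z(A)) = \<Sum>\<^sub>m (1/m) \<Sum>\<^sub>w wt(w) (c(w) - 1)\<close>, where \<open>c(w)\<close> is the total weight
  of the blocks containing all vertices of \<open>w\<close>. Since \<open>\<B>\<close> is closed under intersection,
  \<open>c(w)\<close> is 1 if some block contains \<open>w\<close> and 0 otherwise; and a closed walk of length less
  than \<open>L\<close> is a power of a primitive one, hence covered. So only the terms with \<open>m \<ge> L\<close>
  survive, each bounded by \<open>tr (|A|\<^sup>m) / L \<le> N \<rho>(|A|)\<^sup>m / L\<close>, and the geometric tail
  gives the bound.\<close>

section \<open>Traces and the logarithm of \<open>det (I - M)\<close>\<close>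

definition trace :: "'a::comm_ring_1 mat \<Rightarrow> 'a" where
  "trace M = (\<Sum>i<dim_row M. M $$ (i, i))"

lemma trace_mult_comm:
  assumes "A \<in> carrier_mat n m" "B \<in> carrier_mat m n"
  shows "trace (A * B) = trace (B * A)"
proof -
  have "trace (A * B) = (\<Sum>i<n. \<Sum>k<m. A $$ (i, k) * B $$ (k, i))"
    using assms unfolding trace_def by (auto simp: scalar_prod_def lessThan_atLeast0 intro!: sum.cong)
  also have "\<dots> = (\<Sum>k<m. \<Sum>i<n. B $$ (k, i) * A $$ (i, k))"
    by (subst sum.swap) (simp add: mult.commute)
  also have "\<dots> = trace (B * A)"
    using assms unfolding trace_def by (auto simp: scalar_prod_def lessThan_atLeast0 intro!: sum.cong)
  finally show ?thesis .
qed

lemma trace_map_of_real: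
  "M \<in> carrier_mat n n \<Longrightarrow> trace (map_mat of_real M) = of_real (trace M)"
  unfolding trace_def by (auto simp: of_real_sum intro!: sum.cong)

lemma upper_triangular_mult:
  assumes A: "A \<in> carrier_mat n n" and B: "B \<in> carrier_mat n n"
    and uA: "upper_triangular A" and uB: "upper_triangular B"
  shows "upper_triangular (A * B)"
    and "i < n \<Longrightarrow> (A * B) $$ (i, i) = A $$ (i, i) * B $$ (i, i)"
proof -
  have zA: "A $$ (i, k) = 0" if "k < i" "i < n" for i k
    using uA A that by auto
  have zB: "B $$ (k, j) = 0" if "j < k" "k < n" for k j
    using uB B that by auto
  show "upper_triangular (A * B)"
  proof
    fix i j assume i: "i < dim_row (A * B)" and j: "j < i"
    have "A $$ (i, k) * B $$ (k, j) = 0" if "k < n" for k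
      using zA[of k i] zB[of j k] i j A that by (cases "k < i") auto
    hence "(\<Sum>k<n. A $$ (i, k) * B $$ (k, j)) = 0" by simp
    thus "(A * B) $$ (i, j) = 0" using i j A B by (simp add: scalar_prod_def lessThan_atLeast0)
  qed
  assume i: "i < n"
  have "(\<Sum>k<n. A $$ (i, k) * B $$ (k, i)) = (\<Sum>k<n. if k = i then A $$ (i, i) * B $$ (i, i) else 0)"
    using zA zB i by (intro sum.cong) (auto simp: neq_iff)
  thus "(A * B) $$ (i, i) = A $$ (i, i) * B $$ (i, i)"
    using A B i by (simp add: scalar_prod_def lessThan_atLeast0)
qed

lemma upper_triangular_pow:
  assumes B: "(B :: 'a::comm_ring_1 mat) \<in> carrier_mat n n" and uB: "upper_triangular B"
  shows "upper_triangular (B ^\<^sub>m m) \<and> (\<forall>i<n. (B ^\<^sub>m m) $$ (i, i) = B $$ (i, i) ^ m)"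
proof (induction m)
  case 0
  then show ?case using B by auto
next
  case (Suc m)
  have "B ^\<^sub>m m \<in> carrier_mat n n" using B by simp
  with Suc show ?case using upper_triangular_mult[OF _ B _ uB] by (simp add: mult.commute)
qed

lemma eigenvalue_list_trace_det:
  fixes M :: "complex mat"
  assumes M: "M \<in> carrier_mat n n"
  shows "\<exists>es. length es = n \<and> set es \<subseteq> spectrum M \<and>
     (\<forall>m. trace (M ^\<^sub>m m) = (\<Sum>i<n. (es ! i) ^ m)) \<and> det (1\<^sub>m n - M) = (\<Prod>i<n. 1 - es ! i)"
proof -
  obtain es where cp: "char_poly M = (\<Prod>a\<leftarrow>es. [:- a, 1:])" and len: "length es = n"
    using char_poly_factorized[OF M] by auto
  obtain B P Q where sd: "schur_decomposition M es = (B, P, Q)" by (metis prod_cases3)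
  from schur_decomposition[OF M cp sd] have
    sw: "similar_mat_wit M B P Q" and uB: "upper_triangular B" and dB: "diag_mat B = es" by auto
  from sw M have Bc: "B \<in> carrier_mat n n" and Pc: "P \<in> carrier_mat n n"
    and Qc: "Q \<in> carrier_mat n n" and QP: "Q * P = 1\<^sub>m n"
    unfolding similar_mat_wit_def Let_def by auto
  have es_diag: "es ! i = B $$ (i, i)" if "i < n" for i
    using dB Bc that by (auto simp: diag_mat_def)
  have "set es \<subseteq> spectrum M"
  proof
    fix e assume "e \<in> set es"
    hence "poly (char_poly M) e = 0" unfolding cp by (induction es) auto
    thus "e \<in> spectrum M" using spectrum_root_char_poly[OF M] by auto
  qed
  moreover have "trace (M ^\<^sub>m m) = (\<Sum>i<n. (es ! i) ^ m)" for m
  proof -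
    have Bm: "B ^\<^sub>m m \<in> carrier_mat n n" using Bc by simp
    have "trace (M ^\<^sub>m m) = trace (Q * (P * B ^\<^sub>m m))"
      unfolding similar_mat_wit_pow_id[OF sw, of m] using Pc Qc Bm by (intro trace_mult_comm) auto
    also have "Q * (P * B ^\<^sub>m m) = B ^\<^sub>m m"
      using Qc Pc Bm by (simp add: assoc_mult_mat[symmetric] QP left_mult_one_mat)
    also have "trace (B ^\<^sub>m m) = (\<Sum>i<n. (es ! i) ^ m)"
      unfolding trace_def using upper_triangular_pow[OF Bc uB, of m] Bc es_diag by auto
    finally show ?thesis .
  qed
  moreover have "det (1\<^sub>m n - M) = (\<Prod>i<n. 1 - es ! i)"
  proof -
    have "det (1\<^sub>m n - M) = poly (char_poly M) 1"
      unfolding char_poly_matrix[OF M]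
      by (rule arg_cong[of _ _ det]) (use M in \<open>auto simp: char_matrix_def\<close>)
    also have "\<dots> = (\<Prod>a\<leftarrow>es. 1 - a)" unfolding cp by (induction es) (auto simp: algebra_simps)
    also have "\<dots> = (\<Prod>i<n. 1 - es ! i)" using len
      by (subst prod.list_conv_set_nth) (simp add: atLeast0LessThan)
    finally show ?thesis .
  qed
  ultimately show ?thesis using len by blast
qed

lemma log_prod_one_minus_series:
  fixes z :: "nat \<Rightarrow> complex"
  assumes z: "\<And>i. i < n \<Longrightarrow> norm (z i) < 1"
  obtains S where "(\<lambda>k. \<Sum>i<n. z i ^ k / of_nat k) sums S" and "(\<Prod>i<n. 1 - z i) = exp (- S)"
proof
  show "(\<lambda>k. \<Sum>i<n. z i ^ k / of_nat k) sums (\<Sum>i<n. - Ln (1 - z i))"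
    using z by (intro sums_sum) (use sums_minus[OF Ln_series[of "- z _"]] in \<open>simp add: power_minus'\<close>)
  have "1 - z i \<noteq> 0" if "i < n" for i using z[OF that] by auto
  thus "(\<Prod>i<n. 1 - z i) = exp (- (\<Sum>i<n. - Ln (1 - z i)))"
    by (simp add: exp_sum sum_negf)
qed

lemma log_det_series:
  fixes M :: "real mat"
  assumes M: "M \<in> carrier_mat n n"
    and sp: "\<forall>e\<in>spectrum (map_mat complex_of_real M). norm e < 1"
  shows "det (1\<^sub>m n - M) > 0"
    and "(\<lambda>m. trace (M ^\<^sub>m m) / real m) sums (- ln (det (1\<^sub>m n - M)))"
proof -
  define Mc where "Mc = map_mat complex_of_real M"
  have Mc: "Mc \<in> carrier_mat n n" using M unfolding Mc_def by auto
  obtain es where len: "length es = n" and ses: "set es \<subseteq> spectrum Mc"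
    and tr_es: "\<And>m. trace (Mc ^\<^sub>m m) = (\<Sum>i<n. (es ! i) ^ m)"
    and det_es: "det (1\<^sub>m n - Mc) = (\<Prod>i<n. 1 - es ! i)"
    using eigenvalue_list_trace_det[OF Mc] by blast
  have "norm (es ! i) < 1" if "i < n" for i
    using sp ses len that unfolding Mc_def by (meson nth_mem subsetD)
  then obtain S where S: "(\<lambda>k. \<Sum>i<n. (es ! i) ^ k / of_nat k) sums S"
    and prod_S: "(\<Prod>i<n. 1 - es ! i) = exp (- S)"
    by (rule log_prod_one_minus_series)
  have "(\<Sum>i<n. (es ! i) ^ k / of_nat k) = complex_of_real (trace (M ^\<^sub>m k) / real k)" for k
    unfolding sum_divide_distrib[symmetric] tr_es[symmetric] Mc_def
      of_real_hom.mat_hom_pow[OF M, symmetric] trace_map_of_real[OF pow_carrier_mat[OF M]]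
    by simp
  with S have "(\<lambda>k. complex_of_real (trace (M ^\<^sub>m k) / real k)) sums S" by simp
  then have re: "(\<lambda>k. trace (M ^\<^sub>m k) / real k) sums Re S" and im: "(\<lambda>k. 0) sums Im S"
    unfolding sums_complex_iff by auto
  have "Im S = 0" using sums_unique2[OF im sums_zero] .
  hence S_real: "S = complex_of_real (Re S)" by (simp add: complex_eq_iff)
  have "1\<^sub>m n - Mc = map_mat complex_of_real (1\<^sub>m n - M)"
    using M unfolding Mc_def by (auto intro!: eq_matI)
  hence "complex_of_real (det (1\<^sub>m n - M)) = exp (- S)"
    using det_es prod_S by (simp add: of_real_hom.hom_det)
  also have "\<dots> = complex_of_real (exp (- Re S))"
    by (subst S_real) (metis exp_of_real of_real_minus)
  finally have "det (1\<^sub>m n - M) = exp (- Re S)" unfolding of_real_eq_iff .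
  thus "det (1\<^sub>m n - M) > 0" "(\<lambda>m. trace (M ^\<^sub>m m) / real m) sums (- ln (det (1\<^sub>m n - M)))"
    using re by simp_all
qed

section \<open>Spectral radius of nonnegative matrices\<close>

lemma rho_nonneg:
  assumes "A \<in> carrier_mat N N" "N > 0"
  shows "rho A \<ge> 0"
  using spectral_radius_mem_max(1)[of "map_mat complex_of_real A" N] assms
  unfolding rho_def by auto

lemma trace_pow_le_rho:
  fixes P :: "real mat"
  assumes P: "P \<in> carrier_mat N N" and N: "N > 0"
  shows "trace (P ^\<^sub>m m) \<le> real N * rho P ^ m"
proof -
  define Pc where "Pc = map_mat complex_of_real P"
  have Pc: "Pc \<in> carrier_mat N N" using P unfolding Pc_def by auto
  obtain es where len: "length es = N" and ses: "set es \<subseteq> spectrum Pc"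
    and tr_es: "\<And>m. trace (Pc ^\<^sub>m m) = (\<Sum>i<N. (es ! i) ^ m)"
    using eigenvalue_list_trace_det[OF Pc] by blast
  have es_le: "norm (es ! i) \<le> rho P" if "i < N" for i
    using spectral_radius_mem_max(2)[OF Pc N] ses len that
    unfolding rho_def Pc_def by (meson image_eqI nth_mem subsetD)
  have "complex_of_real (trace (P ^\<^sub>m m)) = trace (Pc ^\<^sub>m m)"
    unfolding Pc_def of_real_hom.mat_hom_pow[OF P, symmetric]
    by (rule trace_map_of_real[symmetric]) (use P in auto)
  hence "trace (P ^\<^sub>m m) \<le> norm (trace (Pc ^\<^sub>m m))" by (metis norm_of_real abs_ge_self)
  also have "\<dots> \<le> (\<Sum>i<N. norm (es ! i) ^ m)" unfolding tr_es norm_power[symmetric] by (rule norm_sum)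
  also have "\<dots> \<le> (\<Sum>i<N. rho P ^ m)" using es_le by (intro sum_mono power_mono) auto
  finally show ?thesis by simp
qed

lemma spectrum_smult_mat:
  fixes P :: "complex mat"
  assumes P: "P \<in> carrier_mat n n" and c: "c \<noteq> 0" and e: "e \<in> spectrum (c \<cdot>\<^sub>m P)"
  shows "e / c \<in> spectrum P"
proof -
  from e obtain v where v: "v \<in> carrier_vec n" "v \<noteq> 0\<^sub>v n" "(c \<cdot>\<^sub>m P) *\<^sub>v v = e \<cdot>\<^sub>v v"
    unfolding spectrum_def eigenvalue_def eigenvector_def using P by auto
  have "P *\<^sub>v v = (e / c) \<cdot>\<^sub>v v"
  proof (rule eq_vecI)
    fix i assume i: "i < dim_vec ((e / c) \<cdot>\<^sub>v v)"
    have "c * (P *\<^sub>v v) $ i = ((c \<cdot>\<^sub>m P) *\<^sub>v v) $ i"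
      using i P v(1) by (simp add: scalar_prod_def sum_distrib_left mult.assoc)
    also have "\<dots> = e * v $ i" using i v by simp
    finally show "(P *\<^sub>v v) $ i = ((e / c) \<cdot>\<^sub>v v) $ i" using i c by (simp add: field_simps)
  qed (use P v in auto)
  thus ?thesis unfolding spectrum_def eigenvalue_def eigenvector_def using P v by auto
qed

lemma spectral_radius_scaled_less_1:
  fixes P :: "real mat"
  assumes P: "P \<in> carrier_mat n n" and n: "n > 0" and s: "rho P < s"
  shows "spectral_radius (map_mat complex_of_real ((1 / s) \<cdot>\<^sub>m P)) < 1"
proof -
  define Pc where "Pc = map_mat complex_of_real P"
  define Q where "Q = map_mat complex_of_real ((1 / s) \<cdot>\<^sub>m P)"
  have Pc: "Pc \<in> carrier_mat n n" and Q: "Q \<in> carrier_mat n n"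
    using P unfolding Pc_def Q_def by auto
  have s_pos: "s > 0" using rho_nonneg[OF P n] s by simp
  have Q_Pc: "Q = complex_of_real (1 / s) \<cdot>\<^sub>m Pc"
    unfolding Q_def Pc_def using P by (auto intro!: eq_matI)
  have "norm e < 1" if e: "e \<in> spectrum Q" for e
  proof -
    have "e / complex_of_real (1 / s) \<in> spectrum Pc"
      by (rule spectrum_smult_mat[OF Pc]) (use s_pos e Q_Pc in auto)
    hence "norm (e / complex_of_real (1 / s)) \<le> rho P"
      using spectral_radius_mem_max(2)[OF Pc n] unfolding rho_def Pc_def by auto
    hence "s * norm e \<le> rho P" using s_pos by (simp add: norm_divide norm_mult mult.commute)
    hence "s * norm e < s * 1" using s by linarith
    thus ?thesis using s_pos by simp
  qed
  thus ?thesis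
    using spectral_radius_mem_max(1)[OF Q n] unfolding Q_def by auto
qed

lemma nonneg_mat_pow_nonneg:
  fixes R :: "real mat"
  assumes R: "R \<in> carrier_mat n n" and R_nonneg: "\<forall>i<n. \<forall>j<n. R $$ (i, j) \<ge> 0"
  shows "\<forall>i<n. \<forall>j<n. (R ^\<^sub>m k) $$ (i, j) \<ge> 0"
proof (induction k)
  case 0 thus ?case using R by auto
next
  case (Suc k)
  have "R ^\<^sub>m k \<in> carrier_mat n n" using R by simp
  with Suc R R_nonneg show ?case
    by (auto simp: scalar_prod_def lessThan_atLeast0 intro!: sum_nonneg)
qed

lemma nonneg_mat_pow_subinvariant:
  fixes R :: "real mat"
  assumes R: "R \<in> carrier_mat n n" and R_nonneg: "\<forall>i<n. \<forall>j<n. R $$ (i, j) \<ge> 0"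
    and a: "a \<ge> 0" and sub: "\<forall>i<n. a * x i \<le> (\<Sum>j<n. R $$ (i, j) * x j)"
  shows "\<forall>i<n. a ^ k * x i \<le> (\<Sum>j<n. (R ^\<^sub>m k) $$ (i, j) * x j)"
proof (induction k)
  case 0
  have "(\<Sum>j<n. (R ^\<^sub>m 0) $$ (i, j) * x j) = (\<Sum>j<n. if j = i then x i else 0)" if "i < n" for i
    using R that by (intro sum.cong) auto
  thus ?case by simp
next
  case (Suc k)
  have Rk: "R ^\<^sub>m k \<in> carrier_mat n n" using R by simp
  show ?case
  proof (intro allI impI)
    fix i assume i: "i < n"
    have "a ^ Suc k * x i = a * (a ^ k * x i)" by simp
    also have "\<dots> \<le> a * (\<Sum>l<n. (R ^\<^sub>m k) $$ (i, l) * x l)"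
      using Suc i a by (intro mult_left_mono) auto
    also have "\<dots> = (\<Sum>l<n. (R ^\<^sub>m k) $$ (i, l) * (a * x l))"
      by (simp add: sum_distrib_left mult_ac)
    also have "\<dots> \<le> (\<Sum>l<n. (R ^\<^sub>m k) $$ (i, l) * (\<Sum>j<n. R $$ (l, j) * x j))"
      using sub nonneg_mat_pow_nonneg[OF R R_nonneg] i by (intro sum_mono mult_left_mono) auto
    also have "\<dots> = (\<Sum>l<n. \<Sum>j<n. (R ^\<^sub>m k) $$ (i, l) * R $$ (l, j) * x j)"
      by (simp add: sum_distrib_left mult.assoc)
    also have "\<dots> = (\<Sum>j<n. (\<Sum>l<n. (R ^\<^sub>m k) $$ (i, l) * R $$ (l, j)) * x j)"
      by (subst sum.swap) (simp add: sum_distrib_right)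
    also have "\<dots> = (\<Sum>j<n. (R ^\<^sub>m Suc k) $$ (i, j) * x j)"
      using i R Rk by (auto simp: scalar_prod_def lessThan_atLeast0 intro!: sum.cong)
    finally show "a ^ Suc k * x i \<le> (\<Sum>j<n. (R ^\<^sub>m Suc k) $$ (i, j) * x j)" .
  qed
qed

text \<open>If \<open>\<rho>(P) < s < \<mu>\<close>, the powers of \<open>P / s\<close> stay bounded, while
  \<open>(\<mu> / s)\<^sup>k x \<le> (P / s)\<^sup>k x\<close> grows without bound.\<close>

lemma collatz_wielandt_le_rho:
  fixes P :: "real mat"
  assumes P: "P \<in> carrier_mat n n" and P_nonneg: "\<forall>i<n. \<forall>j<n. P $$ (i, j) \<ge> 0"
    and x_nonneg: "\<forall>i<n. x i \<ge> 0" and i0: "i0 < n" "x i0 > 0"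
    and sub: "\<forall>i<n. mu * x i \<le> (\<Sum>j<n. P $$ (i, j) * x j)"
  shows "mu \<le> rho P"
proof (rule ccontr)
  assume "\<not> mu \<le> rho P"
  hence lt: "rho P < mu" by simp
  have n: "n > 0" using i0 by simp
  define s where "s = (rho P + mu) / 2"
  have s: "rho P < s" "s < mu" "s > 0" using lt rho_nonneg[OF P n] unfolding s_def by auto
  define R where "R = (1 / s) \<cdot>\<^sub>m P"
  have R: "R \<in> carrier_mat n n" using P unfolding R_def by auto
  have R_nonneg: "\<forall>i<n. \<forall>j<n. R $$ (i, j) \<ge> 0" using P_nonneg P s unfolding R_def by auto
  obtain c where c: "\<And>k. norm_bound (map_mat complex_of_real R ^\<^sub>m k) c"
    using spectral_radius_jnf_norm_bound_less_1_upper_triangular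
      spectral_radius_scaled_less_1[OF P n s(1)] R unfolding R_def by fastforce
  have R_pow_le: "(R ^\<^sub>m k) $$ (i, j) \<le> c" if "i < n" "j < n" for i j k
  proof -
    have "norm (map_mat complex_of_real (R ^\<^sub>m k) $$ (i, j)) \<le> c"
      using c[of k] that R unfolding norm_bound_def of_real_hom.mat_hom_pow[OF R, symmetric] by simp
    thus ?thesis using that R by simp
  qed
  define a where "a = mu / s"
  have a: "a > 1" using s unfolding a_def by simp
  have "\<forall>i<n. a * x i \<le> (\<Sum>j<n. R $$ (i, j) * x j)"
    using sub P s unfolding a_def R_def by (auto simp: sum_divide_distrib[symmetric] divide_right_mono)
  from nonneg_mat_pow_subinvariant[OF R R_nonneg _ this] a
  have grow: "a ^ k * x i0 \<le> (\<Sum>j<n. (R ^\<^sub>m k) $$ (i0, j) * x j)" for k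
    using i0 by auto
  have bounded: "a ^ k * x i0 \<le> c * (\<Sum>j<n. x j)" for k
  proof -
    have "(\<Sum>j<n. (R ^\<^sub>m k) $$ (i0, j) * x j) \<le> (\<Sum>j<n. c * x j)"
      using R_pow_le i0 x_nonneg by (intro sum_mono mult_right_mono) auto
    thus ?thesis using grow[of k] by (simp add: sum_distrib_left)
  qed
  obtain k where "c * (\<Sum>j<n. x j) / x i0 < a ^ k" using real_arch_pow[OF a] by blast
  thus False using bounded[of k] i0 by (simp add: field_simps)
qed

section \<open>Principal submatrices\<close>

lemma principal_submatrix_carrier:
  assumes "A \<in> carrier_mat N N" "B \<subseteq> {0..<N}"
  shows "principal_submatrix A B \<in> carrier_mat (card B) (card B)"
proof -
  have "{i. i < N \<and> i \<in> B} = B" using assms(2) by auto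
  thus ?thesis using assms(1) dim_submatrix[of A B B] unfolding principal_submatrix_def by auto
qed

lemma principal_submatrix_index:
  assumes "A \<in> carrier_mat N N" "B \<subseteq> {0..<N}" "i < card B" "j < card B"
  shows "principal_submatrix A B $$ (i, j) = A $$ (pick B i, pick B j)"
proof -
  have "{i. i < N \<and> i \<in> B} = B" using assms(2) by auto
  thus ?thesis
    using assms submatrix_index[of i A B j B] unfolding principal_submatrix_def by auto
qed

lemma inj_on_pick: "inj_on (pick B) {..<card B}"
  by (rule strict_mono_on_imp_inj_on) (auto simp: strict_mono_on_def intro: pick_mono_le)

lemma pick_image: "finite B \<Longrightarrow> pick B ` {..<card B} = B"
proof (intro equalityI subsetI)
  fix b assume "b \<in> pick B ` {..<card B}"
  thus "b \<in> B" using pick_in_set_le by auto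
next
  fix b assume "finite B" "b \<in> B"
  hence "card {a \<in> B. a < b} < card B" by (intro psubset_card_mono) auto
  thus "b \<in> pick B ` {..<card B}" using pick_card_in_set[OF \<open>b \<in> B\<close>] by force
qed

lemma principal_submatrix_full:
  assumes A: "A \<in> carrier_mat N N"
  shows "principal_submatrix A {0..<N} = A"
proof -
  have "pick {0..<N} i = i" if "i < N" for i
  proof -
    have "{a \<in> {0..<N}. a < i} = {0..<i}" using that by auto
    thus ?thesis using pick_card_in_set[of i "{0..<N}"] that by simp
  qed
  thus ?thesis using principal_submatrix_carrier[OF A, of "{0..<N}"] principal_submatrix_index[OF A]
    A by (intro eq_matI) auto
qed

lemma eigenvector_principal_submatrix_norm_le:
  assumes A: "A \<in> carrier_mat N N" and B: "B \<subseteq> {0..<N}" and v: "v \<in> carrier_vec (card B)"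
    and ev: "map_mat complex_of_real (principal_submatrix A B) *\<^sub>v v = e \<cdot>\<^sub>v v"
    and k: "k < card B"
  shows "norm e * norm (v $ k) \<le> (\<Sum>l<card B. \<bar>A $$ (pick B k, pick B l)\<bar> * norm (v $ l))"
proof -
  have "e * v $ k = (map_mat complex_of_real (principal_submatrix A B) *\<^sub>v v) $ k"
    using ev v k by simp
  also have "\<dots> = (\<Sum>l<card B. complex_of_real (A $$ (pick B k, pick B l)) * v $ l)"
    using principal_submatrix_carrier[OF A B] principal_submatrix_index[OF A B k] v k
    by (auto simp: scalar_prod_def lessThan_atLeast0 intro!: sum.cong)
  finally have "norm e * norm (v $ k)
      = norm (\<Sum>l<card B. complex_of_real (A $$ (pick B k, pick B l)) * v $ l)"
    by (metis norm_mult)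
  also have "\<dots> \<le> (\<Sum>l<card B. \<bar>A $$ (pick B k, pick B l)\<bar> * norm (v $ l))"
    by (rule order.trans[OF norm_sum]) (simp add: norm_mult)
  finally show ?thesis .
qed

text \<open>The moduli of the entries of a vector indexed by \<open>B\<close> (the rows of \<open>A\<^sub>B\<close>), placed at
  the corresponding indices of \<open>A\<close> and extended by zero.\<close>

definition abs_extension :: "nat set \<Rightarrow> complex Matrix.vec \<Rightarrow> nat \<Rightarrow> real" where
  "abs_extension B v a = (if a \<in> B then norm (v $ card {b \<in> B. b < a}) else 0)"

lemma abs_extension_pick: "k < card B \<Longrightarrow> abs_extension B v (pick B k) = norm (v $ k)"
  using pick_in_set_le card_pick_le unfolding abs_extension_def by simp

lemma eigenvector_abs_extension_subinvariant:
  assumes A: "A \<in> carrier_mat N N" and B: "B \<subseteq> {0..<N}" and v: "v \<in> carrier_vec (card B)"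
    and ev: "map_mat complex_of_real (principal_submatrix A B) *\<^sub>v v = e \<cdot>\<^sub>v v" and i: "i < N"
  shows "norm e * abs_extension B v i \<le> (\<Sum>b<N. abs_mat A $$ (i, b) * abs_extension B v b)"
proof -
  let ?x = "abs_extension B v"
  have finB: "finite B" using B finite_subset by blast
  have absA_index: "abs_mat A $$ (i, b) = \<bar>A $$ (i, b)\<bar>" if "b < N" for b
    using A i that unfolding abs_mat_def by auto
  have x_nonneg: "?x a \<ge> 0" for a unfolding abs_extension_def by simp
  have pick_lt: "pick B l < N" if "l < card B" for l using pick_in_set_le[OF that] B by auto
  have "norm e * ?x i \<le> (\<Sum>b\<in>B. abs_mat A $$ (i, b) * ?x b)"
  proof (cases "i \<in> B")
    case True
    hence "i \<in> pick B ` {..<card B}" using pick_image[OF finB] by simp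
    then obtain k where k: "k < card B" and ik: "i = pick B k" by auto
    have "(\<Sum>b\<in>B. abs_mat A $$ (i, b) * ?x b) = (\<Sum>l<card B. abs_mat A $$ (i, pick B l) * ?x (pick B l))"
      using sum.reindex[OF inj_on_pick[of B], of "\<lambda>b. abs_mat A $$ (i, b) * ?x b"]
        pick_image[OF finB] by simp
    also have "\<dots> = (\<Sum>l<card B. \<bar>A $$ (pick B k, pick B l)\<bar> * norm (v $ l))"
      using absA_index abs_extension_pick pick_lt ik by (intro sum.cong) auto
    finally show ?thesis
      using eigenvector_principal_submatrix_norm_le[OF A B v ev k] abs_extension_pick[OF k] ik
      by simp
  next
    case False
    have "0 \<le> (\<Sum>b\<in>B. abs_mat A $$ (i, b) * ?x b)"
      using absA_index x_nonneg B by (intro sum_nonneg) auto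
    thus ?thesis using False unfolding abs_extension_def by simp
  qed
  also have "\<dots> \<le> (\<Sum>b<N. abs_mat A $$ (i, b) * ?x b)"
    using absA_index x_nonneg B by (intro sum_mono2) auto
  finally show ?thesis .
qed

lemma spectrum_principal_submatrix_le_rho_abs:
  assumes A: "A \<in> carrier_mat N N" and B: "B \<subseteq> {0..<N}"
    and e: "e \<in> spectrum (map_mat complex_of_real (principal_submatrix A B))"
  shows "norm e \<le> rho (abs_mat A)"
proof -
  from e obtain v where v: "v \<in> carrier_vec (card B)" "v \<noteq> 0\<^sub>v (card B)"
    and ev: "map_mat complex_of_real (principal_submatrix A B) *\<^sub>v v = e \<cdot>\<^sub>v v"
    unfolding spectrum_def eigenvalue_def eigenvector_def
    using principal_submatrix_carrier[OF A B] by auto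
  obtain j where j: "j < card B" "v $ j \<noteq> 0"
    using v by (metis carrier_vecD eq_vecI index_zero_vec(1,2))
  show ?thesis
  proof (rule collatz_wielandt_le_rho)
    show "abs_mat A \<in> carrier_mat N N" "\<forall>i<N. \<forall>j<N. 0 \<le> abs_mat A $$ (i, j)"
      using A unfolding abs_mat_def by auto
    show "\<forall>i<N. 0 \<le> abs_extension B v i" unfolding abs_extension_def by simp
    show "pick B j < N" "0 < abs_extension B v (pick B j)"
      using pick_in_set_le[OF j(1)] B abs_extension_pick[OF j(1)] j(2) by auto
    show "\<forall>i<N. norm e * abs_extension B v i \<le> (\<Sum>b<N. abs_mat A $$ (i, b) * abs_extension B v b)"
      using eigenvector_abs_extension_subinvariant[OF A B v(1) ev] by blast
  qed
qed

lemma log_det_principal_submatrix: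
  assumes A: "A \<in> carrier_mat N N" and rho: "rho (abs_mat A) < 1" and B: "B \<subseteq> {0..<N}"
  shows "det_I_minus (principal_submatrix A B) > 0"
    and "(\<lambda>m. trace (principal_submatrix A B ^\<^sub>m m) / real m)
           sums (- ln (det_I_minus (principal_submatrix A B)))"
proof -
  note S = principal_submatrix_carrier[OF A B]
  have "\<forall>e\<in>spectrum (map_mat complex_of_real (principal_submatrix A B)). norm e < 1"
    using spectrum_principal_submatrix_le_rho_abs[OF A B] rho by fastforce
  from log_det_series[OF S this] S
  show "det_I_minus (principal_submatrix A B) > 0"
    "(\<lambda>m. trace (principal_submatrix A B ^\<^sub>m m) / real m)
       sums (- ln (det_I_minus (principal_submatrix A B)))"
    unfolding det_I_minus_def by simp_all
qed

section \<open>Traces of powers as sums over closed walks\<close>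

text \<open>Index sequences of length \<open>m + 1\<close> in \<open>S\<close>, with no condition on the entries of the matrix
  along them; those of nonzero weight are exactly the walks.\<close>

definition index_seqs :: "nat set \<Rightarrow> nat \<Rightarrow> nat \<Rightarrow> nat \<Rightarrow> nat list set" where
  "index_seqs S m a b = {w. length w = Suc m \<and> set w \<subseteq> S \<and> hd w = a \<and> last w = b}"

definition closed_index_seqs :: "nat set \<Rightarrow> nat \<Rightarrow> nat list set" where
  "closed_index_seqs S m = {w. length w = Suc m \<and> set w \<subseteq> S \<and> hd w = last w}"

definition walk_weight :: "real mat \<Rightarrow> nat list \<Rightarrow> real" where
  "walk_weight A w = (\<Prod>t<length w - 1. A $$ (w ! t, w ! Suc t))"

lemma finite_index_seqs: "finite S \<Longrightarrow> finite (index_seqs S m a b)"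
  unfolding index_seqs_def
  by (rule finite_subset[OF _ finite_lists_length_eq[of S "Suc m"]]) auto

lemma finite_closed_index_seqs: "finite S \<Longrightarrow> finite (closed_index_seqs S m)"
  unfolding closed_index_seqs_def
  by (rule finite_subset[OF _ finite_lists_length_eq[of S "Suc m"]]) auto

lemma walk_weight_snoc:
  assumes "w \<noteq> []"
  shows "walk_weight A (w @ [b]) = walk_weight A w * A $$ (last w, b)"
proof -
  obtain k where k: "length w = Suc k" using assms by (cases w) auto
  have "(\<Prod>t<k. A $$ ((w @ [b]) ! t, (w @ [b]) ! Suc t)) = walk_weight A w"
    unfolding walk_weight_def using k by (intro prod.cong) (auto simp: nth_append)
  moreover have "(w @ [b]) ! k = last w" "(w @ [b]) ! Suc k = b"
    using k assms by (simp_all add: nth_append last_conv_nth)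
  ultimately show ?thesis unfolding walk_weight_def[of A "w @ [b]"] using k by simp
qed

lemma index_seqs_0: "a \<in> S \<Longrightarrow> index_seqs S 0 a b = (if a = b then {[a]} else {})"
  unfolding index_seqs_def by (auto simp: length_Suc_conv)

lemma index_seqs_Suc:
  assumes b: "b \<in> S"
  shows "index_seqs S (Suc m) a b = (\<lambda>w. w @ [b]) ` (\<Union>c\<in>S. index_seqs S m a c)"
proof (intro equalityI subsetI)
  fix v assume "v \<in> index_seqs S (Suc m) a b"
  hence v: "length v = Suc (Suc m)" "set v \<subseteq> S" "hd v = a" "last v = b"
    unfolding index_seqs_def by auto
  then obtain u where u: "v = u @ [b]" "u \<noteq> []"
    by (metis append_butlast_last_id length_butlast list.size(3) diff_Suc_1 nat.distinct(1)
        length_0_conv)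
  have "u \<in> index_seqs S m a (last u)" "last u \<in> S"
    using v u unfolding index_seqs_def by auto
  thus "v \<in> (\<lambda>w. w @ [b]) ` (\<Union>c\<in>S. index_seqs S m a c)" using u by blast
next
  fix v assume "v \<in> (\<lambda>w. w @ [b]) ` (\<Union>c\<in>S. index_seqs S m a c)"
  thus "v \<in> index_seqs S (Suc m) a b" unfolding index_seqs_def using b by (auto simp: hd_append)
qed

lemma sum_index_seqs_Suc:
  assumes S: "finite S" and b: "b \<in> S"
  shows "(\<Sum>w\<in>index_seqs S (Suc m) a b. walk_weight A w)
       = (\<Sum>c\<in>S. (\<Sum>w\<in>index_seqs S m a c. walk_weight A w) * A $$ (c, b))"
proof -
  have inj: "inj_on (\<lambda>w. w @ [b]) (\<Union>c\<in>S. index_seqs S m a c)" by (rule inj_onI) simp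
  have "(\<Sum>w\<in>index_seqs S (Suc m) a b. walk_weight A w)
      = (\<Sum>w\<in>(\<Union>c\<in>S. index_seqs S m a c). walk_weight A (w @ [b]))"
    unfolding index_seqs_Suc[OF b] by (simp add: sum.reindex[OF inj])
  also have "\<dots> = (\<Sum>c\<in>S. \<Sum>w\<in>index_seqs S m a c. walk_weight A (w @ [b]))"
    by (rule sum.UNION_disjoint) (simp_all add: S finite_index_seqs, auto simp: index_seqs_def)
  also have "\<dots> = (\<Sum>c\<in>S. (\<Sum>w\<in>index_seqs S m a c. walk_weight A w) * A $$ (c, b))"
    unfolding sum_distrib_right
    by (intro sum.cong refl) (auto simp: index_seqs_def intro!: walk_weight_snoc)
  finally show ?thesis .
qed

lemma pow_principal_submatrix_index:
  assumes A: "A \<in> carrier_mat N N" and B: "B \<subseteq> {0..<N}" and i: "i < card B"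
  shows "j < card B \<Longrightarrow> (principal_submatrix A B ^\<^sub>m m) $$ (i, j)
           = (\<Sum>w\<in>index_seqs B m (pick B i) (pick B j). walk_weight A w)"
proof (induction m arbitrary: j)
  case 0
  have "(pick B i = pick B j) = (i = j)" using inj_on_pick i 0 by (auto dest: inj_onD)
  thus ?case
    using principal_submatrix_carrier[OF A B] index_seqs_0[OF pick_in_set_le[OF i]] 0 i
    by (auto simp: walk_weight_def)
next
  case (Suc m)
  note S = principal_submatrix_carrier[OF A B]
  have finB: "finite B" using B finite_subset by blast
  have "(principal_submatrix A B ^\<^sub>m Suc m) $$ (i, j)
      = (\<Sum>l<card B. (principal_submatrix A B ^\<^sub>m m) $$ (i, l) * principal_submatrix A B $$ (l, j))"
    using S i Suc.prems by (simp add: scalar_prod_def lessThan_atLeast0)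
  also have "\<dots> = (\<Sum>l<card B. (\<Sum>w\<in>index_seqs B m (pick B i) (pick B l). walk_weight A w)
                     * A $$ (pick B l, pick B j))"
    using Suc principal_submatrix_index[OF A B] by (intro sum.cong) auto
  also have "\<dots> = (\<Sum>c\<in>B. (\<Sum>w\<in>index_seqs B m (pick B i) c. walk_weight A w) * A $$ (c, pick B j))"
    using sum.reindex[OF inj_on_pick[of B], of "\<lambda>c. (\<Sum>w\<in>index_seqs B m (pick B i) c. walk_weight A w)
      * A $$ (c, pick B j)"] pick_image[OF finB] by simp
  also have "\<dots> = (\<Sum>w\<in>index_seqs B (Suc m) (pick B i) (pick B j). walk_weight A w)"
    using sum_index_seqs_Suc[OF finB pick_in_set_le[OF Suc.prems]] by simp
  finally show ?case .
qed

lemma trace_pow_principal_submatrix: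
  assumes A: "A \<in> carrier_mat N N" and B: "B \<subseteq> {0..<N}"
  shows "trace (principal_submatrix A B ^\<^sub>m m) = (\<Sum>w\<in>closed_index_seqs B m. walk_weight A w)"
proof -
  have finB: "finite B" using B finite_subset by blast
  have "trace (principal_submatrix A B ^\<^sub>m m)
      = (\<Sum>i<card B. \<Sum>w\<in>index_seqs B m (pick B i) (pick B i). walk_weight A w)"
    unfolding trace_def using pow_principal_submatrix_index[OF A B] principal_submatrix_carrier[OF A B]
    by simp
  also have "\<dots> = (\<Sum>a\<in>B. \<Sum>w\<in>index_seqs B m a a. walk_weight A w)"
    using sum.reindex[OF inj_on_pick[of B], of "\<lambda>a. \<Sum>w\<in>index_seqs B m a a. walk_weight A w"]
      pick_image[OF finB] by simp
  also have "\<dots> = (\<Sum>w\<in>(\<Union>a\<in>B. index_seqs B m a a). walk_weight A w)"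
    by (intro sum.UNION_disjoint[symmetric])
      (simp_all add: finB finite_index_seqs, auto simp: index_seqs_def)
  also have "(\<Union>a\<in>B. index_seqs B m a a) = closed_index_seqs B m"
    unfolding index_seqs_def closed_index_seqs_def
    by (auto dest: hd_in_set) (metis Zero_not_Suc hd_in_set list.size(3) subsetD)
  finally show ?thesis .
qed

lemma trace_pow:
  assumes A: "A \<in> carrier_mat N N"
  shows "trace (A ^\<^sub>m m) = (\<Sum>w\<in>closed_index_seqs {0..<N} m. walk_weight A w)"
  using trace_pow_principal_submatrix[OF A, of "{0..<N}"] principal_submatrix_full[OF A] by simp

lemma trace_pow_abs_mat:
  assumes A: "A \<in> carrier_mat N N"
  shows "trace (abs_mat A ^\<^sub>m m) = (\<Sum>w\<in>closed_index_seqs {0..<N} m. \<bar>walk_weight A w\<bar>)"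
proof -
  have "walk_weight (abs_mat A) w = \<bar>walk_weight A w\<bar>" if "w \<in> closed_index_seqs {0..<N} m" for w
  proof -
    have "w ! t < N" if "t < length w" for t
      using \<open>w \<in> closed_index_seqs {0..<N} m\<close> nth_mem[OF that] unfolding closed_index_seqs_def by auto
    thus ?thesis using A unfolding walk_weight_def abs_mat_def by (simp add: abs_prod)
  qed
  moreover have "abs_mat A \<in> carrier_mat N N" using A unfolding abs_mat_def by simp
  ultimately show ?thesis using trace_pow by simp
qed

lemma closed_walk_of_walk_weight:
  assumes A: "A \<in> carrier_mat N N" and w: "w \<in> closed_index_seqs {0..<N} m" and m: "m \<ge> 1"
    and nz: "walk_weight A w \<noteq> 0"
  shows "closed_walk A w" and "walk_length w = m"
proof -
  have w': "length w = Suc m" "set w \<subseteq> {0..<N}" "hd w = last w"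
    using w unfolding closed_index_seqs_def by auto
  have "\<forall>t. Suc t < length w \<longrightarrow> A $$ (w ! t, w ! Suc t) \<noteq> 0"
    using nz unfolding walk_weight_def by (simp add: prod_zero_iff)
  thus "closed_walk A w" unfolding closed_walk_def walk_def using w' m A by auto
  show "walk_length w = m" unfolding walk_length_def using w' by simp
qed

section \<open>Short closed walks are covered\<close>

lemma tl_walk_power: "c \<noteq> [] \<Longrightarrow> k \<ge> 1 \<Longrightarrow> tl (walk_power c k) = concat (replicate k (tl c))"
  unfolding walk_power_def by (cases k) auto

lemma concat_replicate_concat_replicate:
  "concat (replicate i (concat (replicate j xs))) = concat (replicate (i * j) xs)"
  by (induction i) (simp_all add: replicate_add)

lemma walk_power_mult:
  assumes d: "d \<noteq> []" and j: "j \<ge> 1" and k: "k \<ge> 1"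
  shows "walk_power (walk_power d j) k = walk_power d (j * k)"
proof -
  have "walk_power (walk_power d j) k
      = d @ concat (replicate (j - 1) (tl d)) @ concat (replicate ((k - 1) * j) (tl d))"
    unfolding walk_power_def[of "walk_power d j" k] tl_walk_power[OF d j]
    by (simp add: walk_power_def concat_replicate_concat_replicate)
  also have "\<dots> = d @ concat (replicate (j - 1 + (k - 1) * j) (tl d))"
    by (simp add: replicate_add)
  also have "j - 1 + (k - 1) * j = j * k - 1"
    using j k by (cases j; cases k) (auto simp: algebra_simps)
  finally show ?thesis unfolding walk_power_def .
qed

lemma set_walk_power: "set (walk_power c k) \<subseteq> set c"
  unfolding walk_power_def by (auto dest: list.set_sel(2)[rotated])
    (metis empty_iff list.set(1) list.set_sel(2) tl_Nil)

lemma orbit_length_orbit_of: "w \<noteq> [] \<Longrightarrow> orbit_length (orbit_of w) = walk_length w"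
proof -
  assume w: "w \<noteq> []"
  have length_shift: "length ((cyclic_shift ^^ k) w) = length w" for k
    by (induction k) (use w in \<open>auto simp: cyclic_shift_def\<close>)
  have "w \<in> orbit_of w" unfolding orbit_of_def by (auto intro: exI[of _ 0])
  hence "(SOME v. v \<in> orbit_of w) \<in> orbit_of w" by (rule someI)
  thus ?thesis unfolding orbit_length_def walk_length_def orbit_of_def using length_shift by auto
qed

lemma closed_walk_primitive_root:
  assumes w: "closed_walk A w"
  obtains c k where "primitive_closed_walk A c" "k \<ge> 1" "w = walk_power c k"
proof -
  define root where "root c \<longleftrightarrow> closed_walk A c \<and> (\<exists>k\<ge>1. w = walk_power c k)" for c
  have "walk_power w 1 = w" by (simp add: walk_power_def)
  hence "root w" unfolding root_def using w by (metis order_refl)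
  then obtain c where "root c" and shortest: "\<And>d. root d \<Longrightarrow> walk_length c \<le> walk_length d"
    using ex_has_least_nat[of root w walk_length] by blast
  then obtain k where c: "closed_walk A c" and k: "k \<ge> 1" and wc: "w = walk_power c k"
    unfolding root_def by auto
  have "primitive_closed_walk A c"
    unfolding primitive_closed_walk_def
  proof (intro conjI c notI)
    assume "\<exists>d j. j \<ge> 2 \<and> closed_walk A d \<and> walk_length d < walk_length c \<and> c = walk_power d j"
    then obtain d j where j: "j \<ge> 2" and d: "closed_walk A d"
      and shorter: "walk_length d < walk_length c" and cd: "c = walk_power d j" by blast
    have "d \<noteq> []" using d unfolding closed_walk_def by auto
    hence "w = walk_power d (j * k)" unfolding wc cd using j k by (intro walk_power_mult) auto
    moreover have "j * k \<ge> 1" using j k by simp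
    ultimately have "root d" unfolding root_def using d by blast
    thus False using shortest shorter by (simp add: not_le[symmetric])
  qed
  thus thesis using k wc by (rule that)
qed

lemma short_closed_walk_covered:
  assumes cover: "\<forall>l\<in>orbits A. orbit_length l < L \<longrightarrow> (\<exists>B\<in>\<B>. covered_by l B)"
    and w: "closed_walk A w" and short: "walk_length w < L"
  shows "\<exists>B\<in>\<B>. set w \<subseteq> B"
proof -
  obtain c k where c: "primitive_closed_walk A c" and "k \<ge> 1" and wc: "w = walk_power c k"
    using closed_walk_primitive_root[OF w] .
  have "c \<noteq> []" using c unfolding primitive_closed_walk_def closed_walk_def by auto
  hence "orbit_length (orbit_of c) = walk_length c" by (rule orbit_length_orbit_of)
  also have "\<dots> \<le> walk_length w" unfolding wc walk_length_def walk_power_def by simp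
  also have "\<dots> < L" by (rule short)
  finally have "orbit_length (orbit_of c) < L" .
  moreover have "orbit_of c \<in> orbits A" unfolding orbits_def using c by blast
  ultimately obtain B where B: "B \<in> \<B>" and "covered_by (orbit_of c) B" using cover by blast
  moreover have "c \<in> orbit_of c" unfolding orbit_of_def by (auto intro: exI[of _ 0])
  ultimately have "set c \<subseteq> B" unfolding covered_by_def by blast
  thus ?thesis using B set_walk_power wc by blast
qed

section \<open>Block weights\<close>

lemma Inter_mem_if_Int_closed:
  assumes closed: "\<forall>B\<in>\<B>. \<forall>B'\<in>\<B>. B \<inter> B' \<in> \<B>"
  shows "finite \<G> \<Longrightarrow> \<G> \<noteq> {} \<Longrightarrow> \<G> \<subseteq> \<B> \<Longrightarrow> \<Inter>\<G> \<in> \<B>"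
  by (induction \<G> rule: finite_ne_induct) (use closed in auto)

declare block_weight.simps [simp del]

definition cover_weight :: "nat set set \<Rightarrow> nat set \<Rightarrow> real" where
  "cover_weight \<B> S = (\<Sum>B\<in>{B\<in>\<B>. S \<subseteq> B}. block_weight \<B> B)"

text \<open>The blocks containing \<open>S\<close> are exactly the blocks containing the smallest one,
  \<open>B\<^sub>0 = \<Inter>{B\<in>\<B>. S \<subseteq> B}\<close>, and the defining recursion of \<open>w\<^bsub>B\<^sub>0\<^esub>\<close> says that
  these weights sum to 1.\<close>

lemma cover_weight_eq_1:
  assumes fin: "finite \<B>" and fin_blocks: "\<forall>B\<in>\<B>. finite B"
    and closed: "\<forall>B\<in>\<B>. \<forall>B'\<in>\<B>. B \<inter> B' \<in> \<B>"
    and "B1 \<in> \<B>" "S \<subseteq> B1"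
  shows "cover_weight \<B> S = 1"
proof -
  define B0 where "B0 = \<Inter>{B\<in>\<B>. S \<subseteq> B}"
  have B0: "B0 \<in> \<B>"
    unfolding B0_def using fin assms(4,5) by (intro Inter_mem_if_Int_closed[OF closed]) auto
  have "{B\<in>\<B>. S \<subseteq> B} = insert B0 {B\<in>\<B>. B0 \<subset> B}"
    using B0 unfolding B0_def by blast
  hence "cover_weight \<B> S = block_weight \<B> B0 + (\<Sum>B\<in>{B\<in>\<B>. B0 \<subset> B}. block_weight \<B> B)"
    unfolding cover_weight_def using fin by (simp add: sum.insert)
  also have "\<dots> = 1"
    using block_weight.simps[of \<B> B0] fin fin_blocks by simp
  finally show ?thesis .
qed

lemma cover_weight_eq_0: "\<not> (\<exists>B\<in>\<B>. S \<subseteq> B) \<Longrightarrow> cover_weight \<B> S = 0"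
  unfolding cover_weight_def by (metis (no_types, lifting) Collect_empty_eq sum.empty)

section \<open>Walk expansion of \<open>ln (Z\<^sub>\<B> / Z(A))\<close>\<close>

lemma weighted_trace_expansion:
  assumes A: "A \<in> carrier_mat N N" and fin: "finite \<B>" and sub: "\<forall>B\<in>\<B>. B \<subseteq> {0..<N}"
  shows "(\<Sum>B\<in>\<B>. block_weight \<B> B * trace (principal_submatrix A B ^\<^sub>m m)) - trace (A ^\<^sub>m m)
       = (\<Sum>w\<in>closed_index_seqs {0..<N} m. walk_weight A w * (cover_weight \<B> (set w) - 1))"
proof -
  let ?W = "closed_index_seqs {0..<N} m"
  have finW: "finite ?W" by (simp add: finite_closed_index_seqs)
  have "block_weight \<B> B * trace (principal_submatrix A B ^\<^sub>m m)
      = (\<Sum>w\<in>?W. if set w \<subseteq> B then block_weight \<B> B * walk_weight A w else 0)" if B: "B \<in> \<B>" for B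
  proof -
    have "closed_index_seqs B m = {w\<in>?W. set w \<subseteq> B}" using sub B unfolding closed_index_seqs_def by auto
    thus ?thesis using trace_pow_principal_submatrix[OF A] sub B sum.inter_filter[OF finW]
      by (simp add: sum_distrib_left)
  qed
  hence "(\<Sum>B\<in>\<B>. block_weight \<B> B * trace (principal_submatrix A B ^\<^sub>m m))
      = (\<Sum>B\<in>\<B>. \<Sum>w\<in>?W. if set w \<subseteq> B then block_weight \<B> B * walk_weight A w else 0)"
    by (rule sum.cong[OF refl])
  also have "\<dots> = (\<Sum>w\<in>?W. \<Sum>B\<in>\<B>. if set w \<subseteq> B then block_weight \<B> B * walk_weight A w else 0)"
    by (rule sum.swap)
  also have "\<dots> = (\<Sum>w\<in>?W. walk_weight A w * cover_weight \<B> (set w))"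
    unfolding cover_weight_def sum.inter_filter[OF fin] sum_distrib_left
    by (intro sum.cong) auto
  finally show ?thesis
    unfolding trace_pow[OF A] by (simp add: algebra_simps sum_subtractf)
qed

lemma weighted_trace_difference_short:
  assumes A: "A \<in> carrier_mat N N" and fin: "finite \<B>" and sub: "\<forall>B\<in>\<B>. B \<subseteq> {0..<N}"
    and closed: "\<forall>B\<in>\<B>. \<forall>B'\<in>\<B>. B \<inter> B' \<in> \<B>"
    and cover: "\<forall>l\<in>orbits A. orbit_length l < L \<longrightarrow> (\<exists>B\<in>\<B>. covered_by l B)"
    and m: "0 < m" "m < L"
  shows "(\<Sum>B\<in>\<B>. block_weight \<B> B * trace (principal_submatrix A B ^\<^sub>m m)) - trace (A ^\<^sub>m m) = 0"
proof -
  have fin_blocks: "\<forall>B\<in>\<B>. finite B" using sub finite_subset by blast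
  have "walk_weight A w * (cover_weight \<B> (set w) - 1) = 0" if w: "w \<in> closed_index_seqs {0..<N} m" for w
  proof (cases "walk_weight A w = 0")
    case False
    with closed_walk_of_walk_weight[OF A w] m
    have "closed_walk A w" "walk_length w < L" by auto
    then obtain B where "B \<in> \<B>" "set w \<subseteq> B" using short_closed_walk_covered[OF cover] by blast
    thus ?thesis using cover_weight_eq_1[OF fin fin_blocks closed] by simp
  qed simp
  thus ?thesis unfolding weighted_trace_expansion[OF A fin sub] by simp
qed

lemma weighted_trace_difference_le:
  assumes A: "A \<in> carrier_mat N N" and N: "N > 0" and fin: "finite \<B>" and sub: "\<forall>B\<in>\<B>. B \<subseteq> {0..<N}"
    and closed: "\<forall>B\<in>\<B>. \<forall>B'\<in>\<B>. B \<inter> B' \<in> \<B>"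
  shows "\<bar>(\<Sum>B\<in>\<B>. block_weight \<B> B * trace (principal_submatrix A B ^\<^sub>m m)) - trace (A ^\<^sub>m m)\<bar>
           \<le> real N * rho (abs_mat A) ^ m"
proof -
  have fin_blocks: "\<forall>B\<in>\<B>. finite B" using sub finite_subset by blast
  have "\<bar>cover_weight \<B> S - 1\<bar> \<le> 1" for S
    using cover_weight_eq_1[OF fin fin_blocks closed] cover_weight_eq_0[of \<B> S] by fastforce
  hence "\<bar>walk_weight A w * (cover_weight \<B> (set w) - 1)\<bar> \<le> \<bar>walk_weight A w\<bar>" for w
    by (simp add: abs_mult mult_left_le)
  hence "\<bar>(\<Sum>B\<in>\<B>. block_weight \<B> B * trace (principal_submatrix A B ^\<^sub>m m)) - trace (A ^\<^sub>m m)\<bar>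
      \<le> trace (abs_mat A ^\<^sub>m m)"
    unfolding weighted_trace_expansion[OF A fin sub] trace_pow_abs_mat[OF A]
    by (intro order.trans[OF sum_abs] sum_mono)
  also have "\<dots> \<le> real N * rho (abs_mat A) ^ m"
    using A N by (intro trace_pow_le_rho) (auto simp: abs_mat_def)
  finally show ?thesis .
qed

lemma ln_Z_ratio_sums:
  assumes A: "A \<in> carrier_mat N N" and rho: "rho (abs_mat A) < 1"
    and fin: "finite \<B>" and sub: "\<forall>B\<in>\<B>. B \<subseteq> {0..<N}"
  shows "(\<lambda>m. ((\<Sum>B\<in>\<B>. block_weight \<B> B * trace (principal_submatrix A B ^\<^sub>m m))
                 - trace (A ^\<^sub>m m)) / real m)
           sums ln (Z_blocks A \<B> / Z_full A)"
proof -
  define d where "d B = det_I_minus (principal_submatrix A B)" for B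
  note log_det_B = log_det_principal_submatrix[OF A rho, folded d_def]
  note log_det_A = log_det_B[of "{0..<N}", unfolded d_def principal_submatrix_full[OF A], simplified]
  have d_pos: "d B > 0" if "B \<in> \<B>" for B using log_det_B(1) sub that by blast
  have factor_pos: "inverse (d B) powr block_weight \<B> B > 0" if "B \<in> \<B>" for B
    using d_pos[OF that] by simp
  have Z_blocks_pos: "Z_blocks A \<B> > 0"
    unfolding Z_blocks_def d_def[symmetric] using factor_pos by (rule prod_pos)
  have "ln (Z_blocks A \<B>) = (\<Sum>B\<in>\<B>. ln (inverse (d B) powr block_weight \<B> B))"
    unfolding Z_blocks_def d_def[symmetric] using factor_pos by (intro ln_prod[OF fin]) auto
  also have "\<dots> = (\<Sum>B\<in>\<B>. block_weight \<B> B * - ln (d B))" by (simp add: ln_inverse)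
  finally have "ln (Z_blocks A \<B> / Z_full A)
      = (\<Sum>B\<in>\<B>. block_weight \<B> B * - ln (d B)) - - ln (det_I_minus A)"
    using Z_blocks_pos log_det_A(1) by (simp add: ln_div Z_full_def ln_inverse)
  moreover have "(\<lambda>m. (\<Sum>B\<in>\<B>. block_weight \<B> B * (trace (principal_submatrix A B ^\<^sub>m m) / real m))
                     - trace (A ^\<^sub>m m) / real m)
      sums ((\<Sum>B\<in>\<B>. block_weight \<B> B * - ln (d B)) - - ln (det_I_minus A))"
    using log_det_B(2) sub log_det_A(2) by (intro sums_diff sums_sum sums_mult) auto
  ultimately show ?thesis by (simp add: diff_divide_distrib sum_divide_distrib)
qed

lemma abs_sums_le_geometric_tail:
  fixes g :: "nat \<Rightarrow> real"
  assumes g: "g sums S" and zero: "\<forall>m<L. g m = 0" and bound: "\<forall>m\<ge>L. \<bar>g m\<bar> \<le> C * r ^ m"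
    and r: "0 \<le> r" "r < 1"
  shows "\<bar>S\<bar> \<le> C * r ^ L / (1 - r)"
proof -
  define h where "h m = (if L \<le> m then C * r ^ m else 0)" for m
  have "(\<lambda>m. C * r ^ L * r ^ m) sums (C * r ^ L * (1 / (1 - r)))"
    using r by (intro sums_mult geometric_sums) simp
  moreover have "(\<lambda>m. h (m + L)) = (\<lambda>m. C * r ^ L * r ^ m)"
    unfolding h_def by (auto simp: power_add mult_ac)
  ultimately have "(\<lambda>m. h (m + L)) sums (C * r ^ L / (1 - r))" by simp
  moreover have "(\<Sum>m<L. h m) = 0" unfolding h_def by simp
  ultimately have "h sums (C * r ^ L / (1 - r))" using sums_iff_shift[of h L] by simp
  moreover have "norm (g m) \<le> h m" for m
    using zero bound unfolding h_def by (cases "L \<le> m") auto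
  ultimately show ?thesis
    using norm_suminf_le[of g h] g by (simp add: sums_iff)
qed

theorem corollary2:
  fixes A :: "real mat" and N L :: nat and \<B> :: "nat set set"
  assumes "A \<in> carrier_mat N N" and "N > 0"
    and "rho (abs_mat A) < 1"
    and "L \<ge> 1"
    and "finite \<B>" and "\<forall>B\<in>\<B>. B \<subseteq> {0..<N}"
    and "\<forall>l\<in>orbits A. orbit_length l < L \<longrightarrow> (\<exists>B\<in>\<B>. covered_by l B)"
    and "\<forall>B\<in>\<B>. \<forall>B'\<in>\<B>. B \<inter> B' \<in> \<B>"
  shows "(1 / real N) * \<bar>ln (Z_blocks A \<B> / Z_full A)\<bar>
           \<le> rho (abs_mat A) ^ L / (real L * (1 - rho (abs_mat A)))"
proof -
  define r where "r = rho (abs_mat A)"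
  define D where "D m = (\<Sum>B\<in>\<B>. block_weight \<B> B * trace (principal_submatrix A B ^\<^sub>m m))
                        - trace (A ^\<^sub>m m)" for m
  have r: "0 \<le> r" "r < 1"
    using rho_nonneg[of "abs_mat A" N] assms(1-3) unfolding r_def abs_mat_def by auto
  have "(\<lambda>m. D m / real m) sums ln (Z_blocks A \<B> / Z_full A)"
    unfolding D_def using ln_Z_ratio_sums assms(1,3,5,6) .
  moreover have "\<forall>m<L. D m / real m = 0" \<comment> \<open>the term \<open>m = 0\<close> vanishes as \<open>x / 0 = 0\<close>\<close>
    using weighted_trace_difference_short[OF assms(1,5,6,8,7)] unfolding D_def by force
  moreover have "\<bar>D m / real m\<bar> \<le> real N / real L * r ^ m" if "L \<le> m" for m
  proof -
    have "\<bar>D m\<bar> \<le> real N * r ^ m"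
      unfolding D_def r_def using weighted_trace_difference_le assms(1,2,5,6,8) .
    hence "\<bar>D m\<bar> / real m \<le> real N * r ^ m / real m" by (simp add: divide_right_mono)
    also have "\<dots> \<le> real N * r ^ m / real L" using that assms(4) r by (intro divide_left_mono) auto
    finally show ?thesis by simp
  qed
  ultimately have "\<bar>ln (Z_blocks A \<B> / Z_full A)\<bar> \<le> real N / real L * r ^ L / (1 - r)"
    using r by (intro abs_sums_le_geometric_tail) auto
  thus ?thesis using assms(2) unfolding r_def by (simp add: field_simps)
qed

end
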